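(* Let $(\mathcal{A},\{\mu_n\}_{n\ge1})$ be an $A_\infty$-algebra and $\mathcal{N}:\mathcal{A}\to\mathcal{A}$ a strict homotopy Nijenhuis operator on it. (i) For every $k\ge0$, $\mathcal{N}^k$ is a strict homotopy Nijenhuis operator on $(\mathcal{A},\{\mu_n\}_{n\ge1})$; hence one has the deformed $A_\infty$-algebra $(\mathcal{A},\{\mu_{n,\mathcal{N}^k}\}_{n\ge1})$. (ii) For all $k,l\ge0$, $\mathcal{N}^l$ is a strict homotopy Nijenhuis operator on the deformed $A_\infty$-algebra $(\mathcal{A},\{\mu_{n,\mathcal{N}^k}\}_{n\ge1})$.
   Context: Over a field of characteristic $0$. An $A_\infty$-algebra: graded vector space $\mathcal{A}$ with degree $n-2$ maps $\mu_n:\mathcal{A}^{\otimes n}\to\mathcal{A}$ such that for all $k\ge1$ and homogeneous $a_1,\dots,a_k$: $\sum_{m+n=k+1}\sum_{i=1}^m(-1)^{i(n+1)+n(|a_1|+\cdots+|a_{i-1}|)}\mu_m(a_1,\dots,a_{i-1},\mu_n(a_i,\dots,a_{i+n-1}),a_{i+n},\dots,a_k)=0$. For a degree $0$ linear map $\mathcal{P}$, $S\subseteq\{1,\dots,n\}$ and homogeneous $a_1,\dots,a_n$, write $\mu_n^{S,\mathcal{P}}(a_1,\dots,a_n)=\mu_n(c_1,\dots,c_n)$ with $c_i=a_i$ for $i\in S$, $c_i=\mathcal{P}(a_i)$ for $i\notin S$. $\mathcal{P}$ is a strict homotopy Nijenhuis operator on $(\mathcal{A},\{\mu_n\})$ if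 $\mu_n(\mathcal{P}a_1,\dots,\mathcal{P}a_n)=\sum_{j=1}^n(-1)^{j-1}\mathcal{P}^j\big(\sum_{|S|=j}\mu_n^{S,\mathcal{P}}(a_1,\dots,a_n)\big)$ for all $n\ge1$. The deformed $A_\infty$-algebra of such $\mathcal{P}$ has $\mu_{1,\mathcal{P}}=\mu_1$ and $\mu_{n,\mathcal{P}}(a_1,\dots,a_n)=\sum_{j=1}^n(-1)^{j-1}\mathcal{P}^{j-1}\big(\sum_{|S|=j}\mu_n^{S,\mathcal{P}}(a_1,\dots,a_n)\big)$ for $n\ge2$ (it is an $A_\infty$-algebra). $\mathcal{N}^0=\mathrm{Id}$. *)

theory Defs
  imports Complex_Main
begin

definition graded_vs :: "('k::field_char_0 \<Rightarrow> 'v::ab_group_add \<Rightarrow> 'v) \<Rightarrow> (int \<Rightarrow> 'v set) \<Rightarrow> bool" where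
  "graded_vs scale G \<longleftrightarrow> vector_space scale \<and> (\<forall>d. Modules.module.subspace scale (G d)) \<and>
     (\<forall>v. \<exists>!c :: int \<Rightarrow> 'v. finite {d. c d \<noteq> 0} \<and> (\<forall>d. c d \<in> G d) \<and>
            v = (\<Sum>d\<in>{d. c d \<noteq> 0}. c d))"

definition homs :: "(int \<Rightarrow> 'v set) \<Rightarrow> int list \<Rightarrow> 'v list \<Rightarrow> bool" where
  "homs G ds as \<longleftrightarrow> length as = length ds \<and> (\<forall>i<length as. as ! i \<in> G (ds ! i))"

definition sgnI :: "int \<Rightarrow> 'k::field" where
  "sgnI e = (if even e then 1 else -1)"

definition multilinear :: "('k::field \<Rightarrow> 'v::ab_group_add \<Rightarrow> 'v) \<Rightarrow> nat \<Rightarrow> ('v list \<Rightarrow> 'v) \<Rightarrow> bool" where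
  "multilinear scale n f \<longleftrightarrow>
     (\<forall>as i. length as = n \<longrightarrow> i < n \<longrightarrow> Vector_Spaces.linear scale scale (\<lambda>x. f (as[i := x])))"

definition stasheff :: "('k::field \<Rightarrow> 'v::ab_group_add \<Rightarrow> 'v) \<Rightarrow> (nat \<Rightarrow> 'v list \<Rightarrow> 'v) \<Rightarrow> nat \<Rightarrow> int list \<Rightarrow> 'v list \<Rightarrow> 'v" where
  "stasheff scale \<mu> k ds as =
     (\<Sum>m\<in>{1..k}. let n = k + 1 - m in
        \<Sum>i\<in>{1..m}. scale (sgnI (int i * (int n + 1) + int n * sum_list (take (i - 1) ds)))
          (\<mu> m (take (i - 1) as @ [\<mu> n (take n (drop (i - 1) as))] @ drop (i - 1 + n) as)))"

definition A_inf :: "('k::field_char_0 \<Rightarrow> 'v::ab_group_add \<Rightarrow> 'v) \<Rightarrow> (int \<Rightarrow> 'v set) \<Rightarrow> (nat \<Rightarrow> 'v list \<Rightarrow> 'v) \<Rightarrow> bool" where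
  "A_inf scale G \<mu> \<longleftrightarrow> graded_vs scale G \<and>
     (\<forall>n\<ge>1. multilinear scale n (\<mu> n) \<and>
        (\<forall>ds as. length ds = n \<longrightarrow> homs G ds as \<longrightarrow> \<mu> n as \<in> G (sum_list ds + int n - 2))) \<and>
     (\<forall>k\<ge>1. \<forall>ds as. length ds = k \<longrightarrow> homs G ds as \<longrightarrow> stasheff scale \<mu> k ds as = 0)"

definition muSP :: "(nat \<Rightarrow> 'v list \<Rightarrow> 'v) \<Rightarrow> ('v \<Rightarrow> 'v) \<Rightarrow> nat \<Rightarrow> nat set \<Rightarrow> 'v list \<Rightarrow> 'v" where
  "muSP \<mu> P n S as = \<mu> n (map (\<lambda>i. if i + 1 \<in> S then as ! i else P (as ! i)) [0..<n])"

definition muSP_sum :: "(nat \<Rightarrow> 'v list \<Rightarrow> 'v) \<Rightarrow> ('v \<Rightarrow> 'v) \<Rightarrow> nat \<Rightarrow> nat \<Rightarrow> 'v list \<Rightarrow> 'v::comm_monoid_add" where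
  "muSP_sum \<mu> P n j as = (\<Sum>S\<in>{S. S \<subseteq> {1..n} \<and> card S = j}. muSP \<mu> P n S as)"

definition strict_hN :: "('k::field_char_0 \<Rightarrow> 'v::ab_group_add \<Rightarrow> 'v) \<Rightarrow> (int \<Rightarrow> 'v set) \<Rightarrow> (nat \<Rightarrow> 'v list \<Rightarrow> 'v) \<Rightarrow> ('v \<Rightarrow> 'v) \<Rightarrow> bool" where
  "strict_hN scale G \<mu> P \<longleftrightarrow> Vector_Spaces.linear scale scale P \<and> (\<forall>d. \<forall>x\<in>G d. P x \<in> G d) \<and>
     (\<forall>n\<ge>1. \<forall>ds as. length ds = n \<longrightarrow> homs G ds as \<longrightarrow>
        \<mu> n (map P as) = (\<Sum>j\<in>{1..n}. scale (sgnI (int j - 1)) ((P ^^ j) (muSP_sum \<mu> P n j as))))"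

text \<open>Deformed multiplications mu_{n,P} (mu_{1,P} = mu_1; the value at n = 0 is irrelevant).\<close>
definition deformed :: "('k::field \<Rightarrow> 'v::ab_group_add \<Rightarrow> 'v) \<Rightarrow> (nat \<Rightarrow> 'v list \<Rightarrow> 'v) \<Rightarrow> ('v \<Rightarrow> 'v) \<Rightarrow> nat \<Rightarrow> 'v list \<Rightarrow> 'v" where
  "deformed scale \<mu> P n as =
     (if n \<le> 1 then \<mu> n as
      else (\<Sum>j\<in>{1..n}. scale (sgnI (int j - 1)) ((P ^^ (j - 1)) (muSP_sum \<mu> P n j as))))"

end

theory Submission
  imports Defs
begin

text \<open>Let \<open>X\<^sub>i\<close> apply \<open>N\<close> to the \<open>i\<close>-th argument of \<open>\<mu>\<^sub>n\<close> and \<open>Y\<close> apply \<open>N\<close> to its output.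
  These are commuting operators, and the Nijenhuis identity for \<open>N\<close> says that
  \<open>\<Prod>\<^sub>i (X\<^sub>i - Y)\<close> annihilates \<open>\<mu>\<^sub>n\<close> evaluated on arbitrary powers of \<open>N\<close>; the identity for
  \<open>N\<^sup>k\<close> is the vanishing of \<open>\<Prod>\<^sub>i (X\<^sub>i\<^sup>k - Y\<^sup>k)\<close>, and \<open>X\<^sup>k - Y\<^sup>k\<close> is a multiple of \<open>X - Y\<close>.
  For (ii), expanding the deformed product turns the Nijenhuis defect of \<open>N\<^sup>l\<close> with respect to
  \<open>\<mu>\<^bsub>n,N\<^sup>k\<^esub>\<close> into a signed combination of images under powers of \<open>N\<close> of Nijenhuis defects
  of \<open>N\<^sup>l\<close> with respect to \<open>\<mu>\<^sub>n\<close>, evaluated on arguments some of which are moved by \<open>N\<^sup>k\<close>;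
  all of these vanish by (i).\<close>

definition signed :: "nat \<Rightarrow> 'v::ab_group_add \<Rightarrow> 'v" where
  "signed m x = (if even m then x else - x)"

lemma signed_0 [simp]: "signed 0 x = x"
  by (simp add: signed_def)

lemma signed_Suc [simp]: "signed (Suc m) x = - signed m x"
  by (simp add: signed_def)

lemma signed_zero [simp]: "signed m 0 = 0"
  by (simp add: signed_def)

lemma signed_sum: "signed m (sum g A) = (\<Sum>a\<in>A. signed m (g a))"
  by (simp add: signed_def sum_negf)

lemma signed_commute: "signed a (signed b x) = signed b (signed a x)"
  by (simp add: signed_def)

lemma linear_signed: "Vector_Spaces.linear s s h \<Longrightarrow> h (signed m x) = signed m (h x)"
  by (simp add: signed_def module_hom.neg[OF module_hom_linearI])

lemma scale_sgnI: "vector_space s \<Longrightarrow> s (sgnI (int m)) x = signed m x"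
  by (simp add: sgnI_def signed_def module.scale_one module.scale_minus_left
      flip: module_iff_vector_space)

lemma linear_funpow: "Vector_Spaces.linear s s N \<Longrightarrow> Vector_Spaces.linear s s (N ^^ k)"
proof (induction k)
  case 0
  then have "vector_space s"
    by (simp add: Vector_Spaces.linear_iff)
  then show ?case
    by (simp add: vector_space.linear_ident)
next
  case (Suc k)
  show ?case
    unfolding funpow.simps(2) by (rule Vector_Spaces.linear_compose[OF Suc.IH[OF Suc.prems] Suc.prems])
qed

lemma funpow_preserves:
  "\<forall>d. \<forall>x\<in>G d. N x \<in> G d \<Longrightarrow> \<forall>d. \<forall>x\<in>G d. (N ^^ k) x \<in> G d"
  by (induction k) auto

lemma funpow_comp_commute:
  assumes "f \<circ> g = g \<circ> f"
  shows "(f ^^ a) \<circ> (g ^^ b) = (g ^^ b) \<circ> (f ^^ a)"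
proof -
  have f_g: "f (g x) = g (f x)" for x
    using assms by (metis comp_apply)
  have fa_g: "(f ^^ a) (g x) = g ((f ^^ a) x)" for x
    by (induction a) (simp_all add: f_g)
  have "(f ^^ a) ((g ^^ b) x) = (g ^^ b) ((f ^^ a) x)" for x
    by (induction b) (simp_all add: fa_g)
  then show ?thesis
    by (simp add: fun_eq_iff)
qed

lemma sum_Pow_insert:
  assumes "finite A" "j \<notin> A"
  shows "(\<Sum>S\<in>Pow (insert j A). g S) = (\<Sum>S\<in>Pow A. g S + g (insert j S))"
proof -
  have "(\<Sum>S\<in>Pow (insert j A). g S) = (\<Sum>S\<in>Pow A. g S) + (\<Sum>S\<in>insert j ` Pow A. g S)"
    unfolding Pow_insert by (rule sum.union_disjoint) (use assms in auto)
  also have "(\<Sum>S\<in>insert j ` Pow A. g S) = (\<Sum>S\<in>Pow A. g (insert j S))"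
    by (rule sum.reindex_cong[where l = "insert j"]) (use assms in \<open>auto simp: inj_on_def\<close>)
  finally show ?thesis
    by (simp add: sum.distrib)
qed

text \<open>With the shift operators \<open>(X\<^sub>i f) e e\<^sub>0 = f (e(i := e i + 1)) e\<^sub>0\<close> and
  \<open>(Y f) e e\<^sub>0 = f e (e\<^sub>0 + 1)\<close>, this is \<open>(\<Prod>\<^sub>i\<^sub>\<in>\<^sub>A (X\<^sub>i\<^bsup>w i\<^esup> - Y\<^bsup>w i\<^esup>)) f\<close> evaluated at \<open>(e, e\<^sub>0)\<close>.\<close>

definition diff_powers_prod ::
    "nat set \<Rightarrow> ((nat \<Rightarrow> nat) \<Rightarrow> nat \<Rightarrow> 'v::ab_group_add) \<Rightarrow> (nat \<Rightarrow> nat) \<Rightarrow> (nat \<Rightarrow> nat) \<Rightarrow> nat \<Rightarrow> 'v"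
  where
  "diff_powers_prod A f w e e0 =
     (\<Sum>S\<in>Pow A. signed (card S) (f (\<lambda>i. if i \<in> A - S then e i + w i else e i) (e0 + sum w S)))"

lemma diff_powers_prod_cong:
  assumes "\<And>i. i \<in> A \<Longrightarrow> w i = w' i"
  shows "diff_powers_prod A f w e e0 = diff_powers_prod A f w' e e0"
  unfolding diff_powers_prod_def
proof (rule sum.cong[OF refl])
  fix S assume "S \<in> Pow A"
  then have "sum w S = sum w' S"
    using assms by (intro sum.cong) auto
  moreover have "(\<lambda>i. if i \<in> A - S then e i + w i else e i) = (\<lambda>i. if i \<in> A - S then e i + w' i else e i)"
    using assms by auto
  ultimately show "signed (card S) (f (\<lambda>i. if i \<in> A - S then e i + w i else e i) (e0 + sum w S)) =
      signed (card S) (f (\<lambda>i. if i \<in> A - S then e i + w' i else e i) (e0 + sum w' S))"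
    by simp
qed

lemma diff_powers_prod_insert:
  assumes "finite A" "j \<notin> A"
  shows "diff_powers_prod (insert j A) f w e e0 =
    diff_powers_prod A f w (e(j := e j + w j)) e0 - diff_powers_prod A f w e (e0 + w j)"
  unfolding diff_powers_prod_def sum_Pow_insert[OF assms] sum_subtractf[symmetric]
proof (rule sum.cong[OF refl])
  fix S assume "S \<in> Pow A"
  then have S: "S \<subseteq> A" "j \<notin> S" "finite S"
    using assms finite_subset by auto
  have "(\<lambda>i. if i \<in> insert j A - S then e i + w i else e i) =
      (\<lambda>i. if i \<in> A - S then (e(j := e j + w j)) i + w i else (e(j := e j + w j)) i)"
    using S assms by auto
  moreover have "(\<lambda>i. if i \<in> insert j A - insert j S then e i + w i else e i) =
      (\<lambda>i. if i \<in> A - S then e i + w i else e i)"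
    using S assms by auto
  moreover have "card (insert j S) = Suc (card S)" "sum w (insert j S) = w j + sum w S"
    using S by simp_all
  ultimately show "signed (card S) (f (\<lambda>i. if i \<in> insert j A - S then e i + w i else e i) (e0 + sum w S)) +
      signed (card (insert j S)) (f (\<lambda>i. if i \<in> insert j A - insert j S then e i + w i else e i)
        (e0 + sum w (insert j S))) =
    signed (card S) (f (\<lambda>i. if i \<in> A - S then (e(j := e j + w j)) i + w i else (e(j := e j + w j)) i)
        (e0 + sum w S)) -
      signed (card S) (f (\<lambda>i. if i \<in> A - S then e i + w i else e i) (e0 + w j + sum w S))"
    by (simp add: add.assoc)
qed

lemma diff_powers_prod_remove:
  assumes "finite A" "j \<in> A"
  shows "diff_powers_prod A f (w(j := a)) e e0 =
    diff_powers_prod (A - {j}) f w (e(j := e j + a)) e0 - diff_powers_prod (A - {j}) f w e (e0 + a)"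
proof -
  have "diff_powers_prod (A - {j}) f (w(j := a)) = diff_powers_prod (A - {j}) f w"
    by (intro ext diff_powers_prod_cong) auto
  then show ?thesis
    using diff_powers_prod_insert[of "A - {j}" j f "w(j := a)" e e0] assms by (simp add: insert_absorb)
qed

lemma diff_powers_prod_eq_0:
  assumes "finite A" and ones: "\<And>e e0. diff_powers_prod A f (\<lambda>_. 1) e e0 = 0"
  shows "diff_powers_prod A f w e e0 = 0"
proof -
  have "diff_powers_prod A f w e e0 = 0" if "finite B" "B \<subseteq> A" "\<forall>i\<in>A - B. w i = 1" for B w e e0
    using that
  proof (induction B arbitrary: w e e0 rule: finite_induct)
    case empty
    then have "diff_powers_prod A f w e e0 = diff_powers_prod A f (\<lambda>_. 1) e e0"
      by (intro diff_powers_prod_cong) auto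
    then show ?case
      using ones by simp
  next
    case (insert j B)
    have j: "j \<in> A"
      using insert.prems by simp
    have "diff_powers_prod A f (w(j := a)) e e0 = 0" for a e e0
    proof (induction a arbitrary: e e0)
      case 0
      show ?case
        unfolding diff_powers_prod_remove[OF \<open>finite A\<close> j] by simp
    next
      case (Suc a)
      txt \<open>\<open>X\<^bsup>a+1\<^esup> - Y\<^bsup>a+1\<^esup> = (X\<^bsup>a\<^esup> - Y\<^bsup>a\<^esup>) X + Y\<^bsup>a\<^esup> (X - Y)\<close>\<close>
      have "diff_powers_prod A f (w(j := Suc a)) e e0 =
          diff_powers_prod A f (w(j := a)) (e(j := Suc (e j))) e0 + diff_powers_prod A f (w(j := 1)) e (e0 + a)"
        unfolding diff_powers_prod_remove[OF \<open>finite A\<close> j] by (simp add: add.commute)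
      also have "\<dots> = 0"
      proof -
        have "diff_powers_prod A f (w(j := 1)) e (e0 + a) = 0"
          by (rule insert.IH) (use insert.prems in auto)
        then show ?thesis
          by (simp only: Suc.IH add_0)
      qed
      finally show ?case .
    qed
    from this[of "w j"] show ?case
      by simp
  qed
  then show ?thesis
    using \<open>finite A\<close> by blast
qed

definition nijenhuis_defect :: "(nat \<Rightarrow> 'v list \<Rightarrow> 'v) \<Rightarrow> ('v \<Rightarrow> 'v) \<Rightarrow> nat \<Rightarrow> 'v list \<Rightarrow> 'v::ab_group_add"
  where "nijenhuis_defect \<mu> P n as = (\<Sum>S\<in>Pow {1..n}. signed (card S) ((P ^^ card S) (muSP \<mu> P n S as)))"

lemma sum_sgnI_muSP_sum:
  assumes "vector_space s" and lin: "\<And>j. Vector_Spaces.linear s s (h j)"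
  shows "(\<Sum>j\<in>{1..n}. s (sgnI (int j - 1)) (h j (muSP_sum \<mu> P n j as))) =
    (\<Sum>S\<in>Pow {1..n} - {{}}. signed (card S - 1) (h (card S) (muSP \<mu> P n S as)))"
proof -
  have card_range: "card ` (Pow {1..n} - {{}}) \<subseteq> {1..n}"
  proof
    fix c assume "c \<in> card ` (Pow {1..n} - {{}})"
    then obtain S where S: "S \<subseteq> {1..n}" "S \<noteq> {}" "c = card S"
      by auto
    then have "0 < card S" "card S \<le> n"
      using card_mono[OF _ S(1)] finite_subset[OF S(1)] by auto
    then show "c \<in> {1..n}"
      using S(3) by simp
  qed
  have "s (sgnI (int j - 1)) (h j (muSP_sum \<mu> P n j as)) =
      (\<Sum>S\<in>{S \<in> Pow {1..n} - {{}}. card S = j}. signed (card S - 1) (h (card S) (muSP \<mu> P n S as)))"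
    if "j \<in> {1..n}" for j
  proof -
    have "int j - 1 = int (j - 1)"
      using that by auto
    then have "s (sgnI (int j - 1)) (h j (muSP_sum \<mu> P n j as)) = signed (j - 1) (h j (muSP_sum \<mu> P n j as))"
      by (simp only: scale_sgnI[OF assms(1)])
    also have "\<dots> = (\<Sum>S\<in>{S. S \<subseteq> {1..n} \<and> card S = j}. signed (j - 1) (h j (muSP \<mu> P n S as)))"
      unfolding muSP_sum_def module_hom.sum[OF module_hom_linearI[OF lin]] signed_sum ..
    also have "\<dots> = (\<Sum>S\<in>{S \<in> Pow {1..n} - {{}}. card S = j}. signed (card S - 1) (h (card S) (muSP \<mu> P n S as)))"
      using that by (intro sum.cong) auto
    finally show ?thesis .
  qed
  then show ?thesis
    using sum.group[OF _ _ card_range, of "\<lambda>S. signed (card S - 1) (h (card S) (muSP \<mu> P n S as))"]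
    by simp
qed

lemma nijenhuis_identity_iff_defect:
  assumes "Vector_Spaces.linear s s P" "length as = n"
  shows "\<mu> n (map P as) = (\<Sum>j\<in>{1..n}. s (sgnI (int j - 1)) ((P ^^ j) (muSP_sum \<mu> P n j as)))
    \<longleftrightarrow> nijenhuis_defect \<mu> P n as = 0"
proof -
  have "vector_space s"
    using assms(1) by (simp add: Vector_Spaces.linear_iff)
  then have rhs: "(\<Sum>j\<in>{1..n}. s (sgnI (int j - 1)) ((P ^^ j) (muSP_sum \<mu> P n j as))) =
      (\<Sum>S\<in>Pow {1..n} - {{}}. signed (card S - 1) ((P ^^ card S) (muSP \<mu> P n S as)))"
    by (rule sum_sgnI_muSP_sum[OF _ linear_funpow[OF assms(1)]])
  have "map (\<lambda>i. P (as ! i)) [0..<n] = map P as"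
    using assms(2) by (simp add: list_eq_iff_nth_eq)
  then have "muSP \<mu> P n {} as = \<mu> n (map P as)"
    by (simp add: muSP_def)
  moreover have "signed (card S) x = - signed (card S - 1) x" if "S \<in> Pow {1..n} - {{}}" for S x
  proof -
    have "card S \<noteq> 0"
      using that finite_subset[of S "{1..n}"] by auto
    then show ?thesis
      by (metis Suc_pred' neq0_conv signed_Suc)
  qed
  then have "(\<Sum>S\<in>Pow {1..n} - {{}}. signed (card S) ((P ^^ card S) (muSP \<mu> P n S as))) =
      - (\<Sum>S\<in>Pow {1..n} - {{}}. signed (card S - 1) ((P ^^ card S) (muSP \<mu> P n S as)))"
    unfolding sum_negf[symmetric] by (rule sum.cong[OF refl])
  ultimately have "nijenhuis_defect \<mu> P n as =
      \<mu> n (map P as) - (\<Sum>S\<in>Pow {1..n} - {{}}. signed (card S - 1) ((P ^^ card S) (muSP \<mu> P n S as)))"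
    unfolding nijenhuis_defect_def by (simp add: sum.remove[of _ "{}"])
  then show ?thesis
    unfolding rhs by simp
qed

lemma strict_hN_iff_defect:
  "strict_hN s G \<mu> P \<longleftrightarrow> Vector_Spaces.linear s s P \<and> (\<forall>d. \<forall>x\<in>G d. P x \<in> G d) \<and>
     (\<forall>n\<ge>1. \<forall>ds as. length ds = n \<longrightarrow> homs G ds as \<longrightarrow> nijenhuis_defect \<mu> P n as = 0)"
proof -
  have "\<mu> n (map P as) = (\<Sum>j\<in>{1..n}. s (sgnI (int j - 1)) ((P ^^ j) (muSP_sum \<mu> P n j as)))
      \<longleftrightarrow> nijenhuis_defect \<mu> P n as = 0"
    if "Vector_Spaces.linear s s P" "length ds = n" "homs G ds as" for n ds as
    using that by (intro nijenhuis_identity_iff_defect) (auto simp: homs_def)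
  then show ?thesis
    unfolding strict_hN_def by blast
qed

definition mu_powers :: "('v \<Rightarrow> 'v) \<Rightarrow> (nat \<Rightarrow> 'v list \<Rightarrow> 'v) \<Rightarrow> nat \<Rightarrow> 'v list \<Rightarrow> (nat \<Rightarrow> nat) \<Rightarrow> nat \<Rightarrow> 'v"
  where "mu_powers N \<mu> n as e e0 = (N ^^ e0) (\<mu> n (map (\<lambda>i. (N ^^ e (Suc i)) (as ! i)) [0..<n]))"

lemma funpow_nijenhuis_defect_shifted:
  assumes "Vector_Spaces.linear s s N"
  shows "(N ^^ e0) (nijenhuis_defect \<mu> (N ^^ k) n (map (\<lambda>i. (N ^^ e (Suc i)) (as ! i)) [0..<n])) =
    diff_powers_prod {1..n} (mu_powers N \<mu> n as) (\<lambda>_. k) e e0"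
  unfolding nijenhuis_defect_def diff_powers_prod_def
    module_hom.sum[OF module_hom_linearI[OF linear_funpow[OF assms]]] linear_signed[OF linear_funpow[OF assms]]
proof (rule sum.cong[OF refl])
  fix S assume "S \<in> Pow {1..n}"
  have "muSP \<mu> (N ^^ k) n S (map (\<lambda>i. (N ^^ e (Suc i)) (as ! i)) [0..<n]) =
      \<mu> n (map (\<lambda>i. (N ^^ (if Suc i \<in> {1..n} - S then e (Suc i) + k else e (Suc i))) (as ! i)) [0..<n])"
  proof -
    have "(N ^^ k) ((N ^^ m) x) = (N ^^ (m + k)) x" for m x
      by (metis add.commute comp_apply funpow_add)
    then show ?thesis
      unfolding muSP_def by (auto intro!: arg_cong[where f = "\<mu> n"])
  qed
  then show "signed (card S) ((N ^^ e0) (((N ^^ k) ^^ card S)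
        (muSP \<mu> (N ^^ k) n S (map (\<lambda>i. (N ^^ e (Suc i)) (as ! i)) [0..<n])))) =
      signed (card S) (mu_powers N \<mu> n as (\<lambda>i. if i \<in> {1..n} - S then e i + k else e i) (e0 + (\<Sum>i\<in>S. k)))"
    by (simp add: mu_powers_def funpow_mult funpow_add mult.commute)
qed

lemma strict_hN_funpow:
  assumes "strict_hN s G \<mu> N"
  shows "strict_hN s G \<mu> (N ^^ k)"
proof -
  have lin: "Vector_Spaces.linear s s N" and deg_N: "\<forall>d. \<forall>x\<in>G d. N x \<in> G d"
    using assms by (auto simp: strict_hN_iff_defect)
  have deg: "\<forall>d. \<forall>x\<in>G d. (N ^^ m) x \<in> G d" for m
    by (rule funpow_preserves[OF deg_N])
  have "nijenhuis_defect \<mu> (N ^^ k) n as = 0" if "n \<ge> 1" "length ds = n" "homs G ds as" for n ds as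
  proof -
    have ones: "diff_powers_prod {1..n} (mu_powers N \<mu> n as) (\<lambda>_. 1) e e0 = 0" for e e0
    proof -
      have "homs G ds (map (\<lambda>i. (N ^^ e (Suc i)) (as ! i)) [0..<n])"
        using that deg by (auto simp: homs_def)
      then have "nijenhuis_defect \<mu> N n (map (\<lambda>i. (N ^^ e (Suc i)) (as ! i)) [0..<n]) = 0"
        using assms that by (auto simp: strict_hN_iff_defect)
      then show ?thesis
        using funpow_nijenhuis_defect_shifted[OF lin, of e0 \<mu> 1 n e as]
        by (simp add: module_hom.zero[OF module_hom_linearI[OF linear_funpow[OF lin]]])
    qed
    have "map (\<lambda>i. (N ^^ 0) (as ! i)) [0..<n] = as"
      using that by (simp add: homs_def list_eq_iff_nth_eq)
    then have "nijenhuis_defect \<mu> (N ^^ k) n as = diff_powers_prod {1..n} (mu_powers N \<mu> n as) (\<lambda>_. k) (\<lambda>_. 0) 0"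
      using funpow_nijenhuis_defect_shifted[OF lin, of 0 \<mu> k n "\<lambda>_. 0" as] by simp
    also have "\<dots> = 0"
      by (rule diff_powers_prod_eq_0[OF _ ones]) simp
    finally show ?thesis .
  qed
  then show ?thesis
    using lin deg by (simp add: strict_hN_iff_defect linear_funpow)
qed

lemma deformed_eq_sum_nonempty:
  assumes "Vector_Spaces.linear s s P" "n \<ge> 1" "length cs = n"
  shows "deformed s \<mu> P n cs = (\<Sum>S\<in>Pow {1..n} - {{}}. signed (card S - 1) ((P ^^ (card S - 1)) (muSP \<mu> P n S cs)))"
proof (cases "n = 1")
  case True
  then obtain c where "cs = [c]"
    using assms(3) by (auto simp: length_Suc_conv)
  moreover have "Pow {1..n} - {{}} = {{1}}"
    using True by auto
  ultimately show ?thesis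
    using True by (simp add: deformed_def muSP_def)
next
  case False
  have "vector_space s"
    using assms(1) by (simp add: Vector_Spaces.linear_iff)
  then show ?thesis
    using False assms(2) sum_sgnI_muSP_sum[of s "\<lambda>j. P ^^ (j - 1)"] linear_funpow[OF assms(1)]
    by (simp add: deformed_def)
qed

lemma muSP_commute:
  assumes "P \<circ> Q = Q \<circ> P"
  shows "muSP \<mu> P n S' (map (\<lambda>i. if i + 1 \<in> S then as ! i else Q (as ! i)) [0..<n]) =
    muSP \<mu> Q n S (map (\<lambda>i. if i + 1 \<in> S' then as ! i else P (as ! i)) [0..<n])"
  using assms unfolding muSP_def by (auto simp: fun_eq_iff intro!: arg_cong[where f = "\<mu> n"])

lemma nijenhuis_defect_deformed:
  assumes lin: "Vector_Spaces.linear s s P" "Vector_Spaces.linear s s Q"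
    and comm: "P \<circ> Q = Q \<circ> P" and "n \<ge> 1" "length as = n"
  shows "nijenhuis_defect (deformed s \<mu> P) Q n as =
    (\<Sum>S'\<in>Pow {1..n} - {{}}. signed (card S' - 1) ((P ^^ (card S' - 1))
      (nijenhuis_defect \<mu> Q n (map (\<lambda>i. if i + 1 \<in> S' then as ! i else P (as ! i)) [0..<n]))))"
proof -
  let ?moved = "\<lambda>R S. map (\<lambda>i. if i + 1 \<in> S then as ! i else R (as ! i)) [0..<n]"
  let ?term = "\<lambda>S S'. signed (card S' - 1) ((P ^^ (card S' - 1)) (signed (card S) ((Q ^^ card S)
      (muSP \<mu> Q n S (?moved P S')))))"
  have "nijenhuis_defect (deformed s \<mu> P) Q n as = (\<Sum>S\<in>Pow {1..n}. \<Sum>S'\<in>Pow {1..n} - {{}}. ?term S S')"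
    unfolding nijenhuis_defect_def
  proof (rule sum.cong[OF refl])
    fix S
    have "muSP (deformed s \<mu> P) Q n S as = deformed s \<mu> P n (?moved Q S)"
      by (simp add: muSP_def)
    also have "\<dots> = (\<Sum>S'\<in>Pow {1..n} - {{}}. signed (card S' - 1) ((P ^^ (card S' - 1)) (muSP \<mu> Q n S (?moved P S'))))"
      using deformed_eq_sum_nonempty[OF lin(1) \<open>n \<ge> 1\<close>] muSP_commute[OF comm] by simp
    finally have deformed_expanded: "muSP (deformed s \<mu> P) Q n S as =
        (\<Sum>S'\<in>Pow {1..n} - {{}}. signed (card S' - 1) ((P ^^ (card S' - 1)) (muSP \<mu> Q n S (?moved P S'))))" .
    have "(Q ^^ b) ((P ^^ a) x) = (P ^^ a) ((Q ^^ b) x)" for a b x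
      using funpow_comp_commute[OF comm, of a b] by (simp add: fun_eq_iff)
    then show "signed (card S) ((Q ^^ card S) (muSP (deformed s \<mu> P) Q n S as)) =
        (\<Sum>S'\<in>Pow {1..n} - {{}}. ?term S S')"
      unfolding deformed_expanded module_hom.sum[OF module_hom_linearI[OF linear_funpow[OF lin(2)]]] signed_sum
      by (simp add: linear_signed[OF linear_funpow[OF lin(1)]] linear_signed[OF linear_funpow[OF lin(2)]]
          signed_commute)
  qed
  also have "\<dots> = (\<Sum>S'\<in>Pow {1..n} - {{}}. \<Sum>S\<in>Pow {1..n}. ?term S S')"
    by (rule sum.swap)
  also have "\<dots> = (\<Sum>S'\<in>Pow {1..n} - {{}}. signed (card S' - 1) ((P ^^ (card S' - 1))
      (nijenhuis_defect \<mu> Q n (?moved P S'))))"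
    by (simp add: nijenhuis_defect_def signed_sum module_hom.sum[OF module_hom_linearI[OF linear_funpow[OF lin(1)]]])
  finally show ?thesis .
qed

lemma strict_hN_deformed:
  assumes Q: "strict_hN s G \<mu> Q"
    and P: "Vector_Spaces.linear s s P" "\<forall>d. \<forall>x\<in>G d. P x \<in> G d"
    and comm: "P \<circ> Q = Q \<circ> P"
  shows "strict_hN s G (deformed s \<mu> P) Q"
proof -
  have "nijenhuis_defect (deformed s \<mu> P) Q n as = 0" if "n \<ge> 1" "length ds = n" "homs G ds as" for n ds as
  proof -
    have "nijenhuis_defect \<mu> Q n (map (\<lambda>i. if i + 1 \<in> S' then as ! i else P (as ! i)) [0..<n]) = 0" for S'
    proof -
      have "homs G ds (map (\<lambda>i. if i + 1 \<in> S' then as ! i else P (as ! i)) [0..<n])"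
        using that P(2) by (auto simp: homs_def)
      then show ?thesis
        using Q that by (auto simp: strict_hN_iff_defect)
    qed
    then show ?thesis
      using Q that by (simp add: nijenhuis_defect_deformed[OF P(1) _ comm] strict_hN_iff_defect homs_def
          module_hom.zero[OF module_hom_linearI[OF linear_funpow[OF P(1)]]])
  qed
  then show ?thesis
    using Q by (simp add: strict_hN_iff_defect)
qed

theorem theorem6p15:
  fixes scale :: "'k::field_char_0 \<Rightarrow> 'v::ab_group_add \<Rightarrow> 'v"
    and G :: "int \<Rightarrow> 'v set"
    and \<mu> :: "nat \<Rightarrow> 'v list \<Rightarrow> 'v"
    and N :: "'v \<Rightarrow> 'v"
  assumes "A_inf scale G \<mu>"
    and "strict_hN scale G \<mu> N"
  shows "(\<forall>k. strict_hN scale G \<mu> (N ^^ k)) \<and>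
         (\<forall>k l. strict_hN scale G (deformed scale \<mu> (N ^^ k)) (N ^^ l))"
proof (intro conjI allI)
  show powers: "strict_hN scale G \<mu> (N ^^ k)" for k
    using assms(2) by (rule strict_hN_funpow)
  fix k l
  have "(N ^^ k) \<circ> (N ^^ l) = (N ^^ l) \<circ> (N ^^ k)"
    by (simp flip: funpow_add add: add.commute)
  moreover have "Vector_Spaces.linear scale scale (N ^^ k)" "\<forall>d. \<forall>x\<in>G d. (N ^^ k) x \<in> G d"
    using powers[of k] by (simp_all add: strict_hN_def)
  ultimately show "strict_hN scale G (deformed scale \<mu> (N ^^ k)) (N ^^ l)"
    using powers[of l] by (intro strict_hN_deformed) auto
qed

end
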